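(* Let $T_1,T_2$ be equidistant trees with $n=3$ leaves such that $T_1$ and $T_2$ have different tree topologies. Then, moving along the tropical line segment $\Gamma_{T_1,T_2}$ from $T_1$ to $T_2$, the tree topology changes from the tree topology of $T_1$ to that of the star tree, and then from the star tree to the tree topology of $T_2$.
   Context: Max-plus arithmetic: $a\oplus b=\max\{a,b\}$, $a\odot b=a+b$; vectors in $\mathbb{R}^3$ with coordinates indexed by pairs $12,13,23$ are considered modulo $\mathbb{R}\mathbf 1$. An equidistant tree is a rooted phylogenetic tree on leaves $\{1,2,3\}$ with nonnegative edge lengths and all root-to-leaf distances equal; its ultrametric $u=(u_{12},u_{13},u_{23})$ consists of pairwise leaf distances, and every ultrametric (maximum of the three coordinates attained at least twice) determines a unique such tree. The star tree has all leaves attached to the root (constant ultrametric). $\Gamma_{T_1,T_2}$ denotes the tropical line segment $\{a\odot u\oplus b\odot v:a,b\in\mathbb R\}$ between the ultrametrics $u,v$ of $T_1,T_2$; each of its points is an ultrametric and thus an equidistant tree. *)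

theory Defs
  imports Main "HOL-Library.Library"
begin

text \<open>Vectors in R^3 with coordinates indexed by the pairs 12, 13, 23,
  represented as triples (u12, u13, u23).\<close>
type_synonym vec3 = "real \<times> real \<times> real"

definition c12 :: "vec3 \<Rightarrow> real" where "c12 u = fst u"
definition c13 :: "vec3 \<Rightarrow> real" where "c13 u = fst (snd u)"
definition c23 :: "vec3 \<Rightarrow> real" where "c23 u = snd (snd u)"

definition trop_add :: "vec3 \<Rightarrow> vec3 \<Rightarrow> vec3" (infixl "\<oplus>\<^sub>t" 65) where
  "u \<oplus>\<^sub>t v = (max (c12 u) (c12 v), max (c13 u) (c13 v), max (c23 u) (c23 v))"

definition trop_smult :: "real \<Rightarrow> vec3 \<Rightarrow> vec3" (infixl "\<odot>\<^sub>t" 70) where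
  "a \<odot>\<^sub>t u = (a + c12 u, a + c13 u, a + c23 u)"

definition ultrametric :: "vec3 \<Rightarrow> bool" where
  "ultrametric u \<longleftrightarrow>
     (let m = max (c12 u) (max (c13 u) (c23 u)) in
       (c12 u = m \<and> c13 u = m) \<or> (c12 u = m \<and> c23 u = m) \<or> (c13 u = m \<and> c23 u = m))"

datatype topology = Star | Cherry12 | Cherry13 | Cherry23

text \<open>Topology of the (unique) equidistant tree with ultrametric u: leaves i,j form
  a cherry iff their distance is strictly smaller than the other two; otherwise
  (all distances equal) it is the star tree.\<close>
definition tree_topology :: "vec3 \<Rightarrow> topology" where
  "tree_topology u =
    (if c12 u < c13 u \<and> c12 u < c23 u then Cherry12
     else if c13 u < c12 u \<and> c13 u < c23 u then Cherry13
     else if c23 u < c12 u \<and> c23 u < c13 u then Cherry23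
     else Star)"

end

theory Submission
  imports Defs
begin

text \<open>A point of the segment is \<open>a \<odot> (u \<oplus> d \<odot> v)\<close> with \<open>d = b - a\<close>, and its topology
  is that of \<open>u \<oplus> d \<odot> v\<close>. While \<open>d \<odot> v\<close> has smaller diameter than \<open>u\<close>, the maximum keeps
  the two or three coordinates of \<open>u\<close> attaining its diameter and leaves the remaining one
  strictly below, so the topology is that of \<open>u\<close>; symmetrically once it is larger. At the
  single value \<open>d = diameter u - diameter v\<close> the diameters agree, and as the topologies
  differ, no coordinate lies strictly below the diameter in both trees: the maximum is
  constant, i.e. the star tree.\<close>

definition diameter :: "vec3 \<Rightarrow> real" where
  "diameter u = max (c12 u) (max (c13 u) (c23 u))"

lemma c_trop_add [simp]:
  "c12 (u \<oplus>\<^sub>t v) = max (c12 u) (c12 v)"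
  "c13 (u \<oplus>\<^sub>t v) = max (c13 u) (c13 v)"
  "c23 (u \<oplus>\<^sub>t v) = max (c23 u) (c23 v)"
  by (simp_all add: trop_add_def c12_def c13_def c23_def)

lemma c_trop_smult [simp]:
  "c12 (a \<odot>\<^sub>t u) = a + c12 u"
  "c13 (a \<odot>\<^sub>t u) = a + c13 u"
  "c23 (a \<odot>\<^sub>t u) = a + c23 u"
  by (simp_all add: trop_smult_def c12_def c13_def c23_def)

lemma vec3_eqI:
  "c12 u = c12 v \<Longrightarrow> c13 u = c13 v \<Longrightarrow> c23 u = c23 v \<Longrightarrow> u = v"
  by (simp add: c12_def c13_def c23_def prod_eq_iff)

lemma trop_add_commute: "u \<oplus>\<^sub>t v = v \<oplus>\<^sub>t u"
  by (rule vec3_eqI) (simp_all add: max.commute)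

lemma trop_segment_point_eq: "(a \<odot>\<^sub>t u) \<oplus>\<^sub>t (b \<odot>\<^sub>t v) = a \<odot>\<^sub>t (u \<oplus>\<^sub>t ((b - a) \<odot>\<^sub>t v))"
  by (rule vec3_eqI) simp_all

lemma diameter_trop_smult [simp]: "diameter (a \<odot>\<^sub>t u) = a + diameter u"
  by (simp add: diameter_def)

lemma coordinates_le_diameter: "c12 u \<le> diameter u" "c13 u \<le> diameter u" "c23 u \<le> diameter u"
  by (simp_all add: diameter_def)

lemma ultrametric_iff:
  "ultrametric u \<longleftrightarrow>
     (c12 u = diameter u \<and> c13 u = diameter u) \<or> (c12 u = diameter u \<and> c23 u = diameter u)
     \<or> (c13 u = diameter u \<and> c23 u = diameter u)"
  by (simp add: ultrametric_def diameter_def Let_def)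

lemma ultrametric_trop_smult [simp]: "ultrametric (a \<odot>\<^sub>t u) \<longleftrightarrow> ultrametric u"
  by (simp add: ultrametric_iff)

lemma tree_topology_trop_smult [simp]: "tree_topology (a \<odot>\<^sub>t u) = tree_topology u"
  by (simp add: tree_topology_def)

lemma ultrametric_cases:
  assumes "ultrametric u"
  obtains
    "tree_topology u = Star" "c12 u = diameter u" "c13 u = diameter u" "c23 u = diameter u"
  | "tree_topology u = Cherry12" "c12 u < diameter u" "c13 u = diameter u" "c23 u = diameter u"
  | "tree_topology u = Cherry13" "c13 u < diameter u" "c12 u = diameter u" "c23 u = diameter u"
  | "tree_topology u = Cherry23" "c23 u < diameter u" "c12 u = diameter u" "c13 u = diameter u"
proof -
  consider
    "c12 u = diameter u" "c13 u = diameter u" "c23 u = diameter u"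
  | "c12 u < diameter u" "c13 u = diameter u" "c23 u = diameter u"
  | "c13 u < diameter u" "c12 u = diameter u" "c23 u = diameter u"
  | "c23 u < diameter u" "c12 u = diameter u" "c13 u = diameter u"
    using assms coordinates_le_diameter[of u] unfolding ultrametric_iff by fastforce
  then show thesis
    by cases (auto intro: that simp: tree_topology_def)
qed

lemma tree_topology_trop_add_below:
  assumes "ultrametric u" and "diameter w < diameter u"
  shows "tree_topology (u \<oplus>\<^sub>t w) = tree_topology u"
proof -
  have "c12 w < diameter u" "c13 w < diameter u" "c23 w < diameter u"
    using assms(2) by (simp_all add: diameter_def)
  then show ?thesis
    by (cases rule: ultrametric_cases[OF assms(1)]) (auto simp: tree_topology_def)
qed

lemma tree_topology_eq_Cherry_if_less_diameter:
  assumes "ultrametric u"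
  shows "c12 u < diameter u \<Longrightarrow> tree_topology u = Cherry12"
    and "c13 u < diameter u \<Longrightarrow> tree_topology u = Cherry13"
    and "c23 u < diameter u \<Longrightarrow> tree_topology u = Cherry23"
  by (cases rule: ultrametric_cases[OF assms]; simp)+

lemma tree_topology_trop_add_equal_diameter:
  assumes "ultrametric u" "ultrametric v" and "diameter u = diameter v"
    and "tree_topology u \<noteq> tree_topology v"
  shows "tree_topology (u \<oplus>\<^sub>t v) = Star"
proof -
  note le = coordinates_le_diameter[of u] coordinates_le_diameter[of v]
  note cherry = tree_topology_eq_Cherry_if_less_diameter[OF assms(1)]
    tree_topology_eq_Cherry_if_less_diameter[OF assms(2)]
  have "\<not> (c12 u < diameter u \<and> c12 v < diameter v)"
    "\<not> (c13 u < diameter u \<and> c13 v < diameter v)"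
    "\<not> (c23 u < diameter u \<and> c23 v < diameter v)"
    using cherry assms(4) by auto
  then have "c12 (u \<oplus>\<^sub>t v) = diameter u" "c13 (u \<oplus>\<^sub>t v) = diameter u" "c23 (u \<oplus>\<^sub>t v) = diameter u"
    using le assms(3) by (auto simp: max_def)
  then show ?thesis
    by (simp add: tree_topology_def)
qed

theorem lemma1:
  fixes u v :: vec3
  assumes "ultrametric u" and "ultrametric v"
    and "tree_topology u \<noteq> tree_topology v"
  shows "\<exists>t1 t2. t1 \<le> t2 \<and>
           (\<forall>a b. b - a < t1 \<longrightarrow> tree_topology ((a \<odot>\<^sub>t u) \<oplus>\<^sub>t (b \<odot>\<^sub>t v)) = tree_topology u) \<and>
           (\<forall>a b. t1 \<le> b - a \<and> b - a \<le> t2 \<longrightarrow> tree_topology ((a \<odot>\<^sub>t u) \<oplus>\<^sub>t (b \<odot>\<^sub>t v)) = Star) \<and>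
           (\<forall>a b. t2 < b - a \<longrightarrow> tree_topology ((a \<odot>\<^sub>t u) \<oplus>\<^sub>t (b \<odot>\<^sub>t v)) = tree_topology v)"
proof -
  define t where "t = diameter u - diameter v"
  have topology_at: "tree_topology ((a \<odot>\<^sub>t u) \<oplus>\<^sub>t (b \<odot>\<^sub>t v)) =
      tree_topology (u \<oplus>\<^sub>t ((b - a) \<odot>\<^sub>t v))" for a b
    by (simp only: trop_segment_point_eq tree_topology_trop_smult)
  have before: "tree_topology (u \<oplus>\<^sub>t (d \<odot>\<^sub>t v)) = tree_topology u" if "d < t" for d
    using that by (intro tree_topology_trop_add_below assms(1)) (simp add: t_def)
  have at: "tree_topology (u \<oplus>\<^sub>t (t \<odot>\<^sub>t v)) = Star"
    using assms by (intro tree_topology_trop_add_equal_diameter) (simp_all add: t_def)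
  have after: "tree_topology (u \<oplus>\<^sub>t (d \<odot>\<^sub>t v)) = tree_topology v" if "t < d" for d
  proof -
    have "tree_topology ((d \<odot>\<^sub>t v) \<oplus>\<^sub>t u) = tree_topology (d \<odot>\<^sub>t v)"
      using assms(2) that by (intro tree_topology_trop_add_below) (simp_all add: t_def)
    then show ?thesis
      by (simp add: trop_add_commute)
  qed
  show ?thesis
    unfolding topology_at
  proof (intro exI[of _ t] conjI allI impI order.refl)
    fix a b :: real
    show "b - a < t \<Longrightarrow> tree_topology (u \<oplus>\<^sub>t ((b - a) \<odot>\<^sub>t v)) = tree_topology u"
      by (rule before)
  next
    fix a b :: real
    assume "t \<le> b - a \<and> b - a \<le> t"
    then have "b - a = t"
      by linarith
    with at show "tree_topology (u \<oplus>\<^sub>t ((b - a) \<odot>\<^sub>t v)) = Star"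
      by simp
  next
    fix a b :: real
    show "t < b - a \<Longrightarrow> tree_topology (u \<oplus>\<^sub>t ((b - a) \<odot>\<^sub>t v)) = tree_topology v"
      by (rule after)
  qed
qed

end
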